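(* Let $\nu\in\mathbb{C}$ with $\operatorname{Re}\nu>-\tfrac12$ and let $a,b,x>0$. Then $$J_{\nu}(ax)J_{\nu}(bx)=\frac{2}{\pi\,\Gamma(2\nu+1)}(abx^2)^{\nu}\int_0^1(1-t^2)^{\nu-\frac12}\cos\!\left(xt\sqrt{a^2+b^2}\right)\,{}_0F_3\!\left(;\nu+1,\tfrac{\nu}{2}+\tfrac14,\tfrac{\nu}{2}+\tfrac34;\tfrac{1}{64}a^2b^2x^4(1-t^2)^2\right)dt .$$
   Context: $J_\nu$ is the Bessel function of the first kind. ${}_0F_3(;b_1,b_2,b_3;w)=\sum_{k\ge0}\frac{w^k}{(b_1)_k(b_2)_k(b_3)_k\,k!}$ with $(c)_k$ the Pochhammer symbol. *)

theory Defs
  imports "HOL-Analysis.Analysis"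
begin

definition besselJ :: "complex \<Rightarrow> complex \<Rightarrow> complex" where
  "besselJ \<nu> z = (\<Sum>k. (-1) ^ k * (z / 2) powr (2 * of_nat k + \<nu>)
                       / (fact k * Gamma (of_nat k + \<nu> + 1)))"

definition hyp0F3 :: "complex \<Rightarrow> complex \<Rightarrow> complex \<Rightarrow> complex \<Rightarrow> complex" where
  "hyp0F3 b1 b2 b3 w = (\<Sum>k. w ^ k /
      (pochhammer b1 k * pochhammer b2 k * pochhammer b3 k * fact k))"

end

(*
  Both sides are expanded into the same absolutely convergent triple series over (k, p, q).
  Put u = a x / 2 and v = b x / 2. Then J_nu(2u) J_nu(2v) = (u v)^nu sum_{m,n} c_m(u) c_n(v)
  with the Bessel coefficients c_m, and the Chu-Vandermonde identity splits c_m(u) c_n(v) into a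
  finite sum over k <= min m n, where m = k + p and n = k + q. On the other side the cosine and
  the 0F3 series are integrated term by term, which leaves the integrals
  int_0^1 t^(2j) (1 - t^2)^w dt = B(j + 1/2, w + 1) / 2; the binomial expansion of
  (u^2 + v^2)^j and Legendre's duplication formula turn the (j, k) term into the sum of the same
  summands over p + q = j.
*)

theory Submission
  imports Defs "HOL-Computational_Algebra.Formal_Power_Series"
begin

lemma Re_pos_not_nonpos_Ints: "0 < Re z \<Longrightarrow> z \<notin> \<int>\<^sub>\<le>\<^sub>0"
  by (auto elim!: nonpos_Ints_cases)

lemma Gamma_Re_pos_nonzero: "0 < Re z \<Longrightarrow> Gamma z \<noteq> 0"
  by (simp add: Gamma_eq_zero_iff Re_pos_not_nonpos_Ints)

lemma pochhammer_Re_pos_nonzero: "0 < Re z \<Longrightarrow> pochhammer z n \<noteq> 0"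
  using Re_pos_not_nonpos_Ints pochhammer_eq_0_imp_nonpos_Int by blast

lemma Gamma_add_of_nat: "z \<notin> \<int>\<^sub>\<le>\<^sub>0 \<Longrightarrow> Gamma (z + of_nat n) = pochhammer z n * Gamma z"
  by (simp add: pochhammer_Gamma Gamma_eq_zero_iff)

definition beta_kernel :: "nat \<Rightarrow> complex \<Rightarrow> real \<Rightarrow> complex" where
  "beta_kernel j w t = of_real t ^ (2 * j) * of_real (1 - t\<^sup>2) powr w"

lemma beta_kernel_of_nat:
  "0 < n \<Longrightarrow> beta_kernel j (of_nat n) t = of_real (t ^ (2 * j) * (1 - t\<^sup>2) ^ n)"
  unfolding beta_kernel_def using powr_nat'[of "of_real (1 - t\<^sup>2)" n] by simp

lemma norm_beta_kernel:
  "t \<in> {0..1} \<Longrightarrow> norm (beta_kernel j w t) = t ^ (2 * j) * (1 - t\<^sup>2) powr Re w"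
  by (simp add: beta_kernel_def norm_mult norm_power norm_powr_real_powr power_le_one)

lemma continuous_on_beta_kernel:
  "0 < Re w \<Longrightarrow> continuous_on {0..1} (beta_kernel j w)"
  unfolding beta_kernel_def by (intro continuous_intros) (auto intro: power_le_one)

lemma has_integral_beta_kernel_Suc:
  assumes "-1 < Re w"
  shows "(beta_kernel (Suc j) w has_integral
           of_nat (2 * j + 1) / (2 * (w + 1)) * integral {0..1} (beta_kernel j (w + 1))) {0..1}"
proof -
  define k where "k = 1 / (2 * (w + 1))"
  define F where "F t = - (of_real (1 - t\<^sup>2) powr (w + 1)) * k" for t :: real
  define G where "G t = (of_real t :: complex) ^ (2 * j + 1)" for t :: real
  have k: "2 * (w + 1) * k = 1"
    using assms by (auto simp: k_def complex_eq_iff)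
  have F_deriv: "(F has_vector_derivative of_real t * of_real (1 - t\<^sup>2) powr w) (at t)"
    if t: "t \<in> {0<..<1}" for t
  proof -
    have "0 < 1 - t\<^sup>2" using t by (simp add: abs_square_less_1)
    then have "complex_of_real (1 - t\<^sup>2) \<notin> \<real>\<^sub>\<le>\<^sub>0" by (simp add: complex_nonpos_Reals_iff)
    then have "((\<lambda>z. - ((1 - z\<^sup>2) powr (w + 1)) * k) has_field_derivative
                 (2 * (w + 1) * k) * (of_real t * of_real (1 - t\<^sup>2) powr w)) (at (of_real t))"
      by (auto intro!: derivative_eq_intros simp: algebra_simps)
    then show ?thesis unfolding F_def k by (auto dest: has_vector_derivative_real_field)
  qed
  have G_deriv: "(G has_vector_derivative of_nat (2 * j + 1) * of_real t ^ (2 * j)) (at t)" for t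
    unfolding G_def
    by (rule has_vector_derivative_real_field)
       (use DERIV_power[OF DERIV_ident, of "2 * j + 1" "of_real t :: complex"] in simp)
  have "beta_kernel j (w + 1) integrable_on {0..1}"
    using assms by (intro integrable_continuous_interval continuous_on_beta_kernel) simp
  then have "((\<lambda>t. - (of_nat (2 * j + 1) * k) * beta_kernel j (w + 1) t) has_integral
               - (of_nat (2 * j + 1) * k) * integral {0..1} (beta_kernel j (w + 1))) {0..1}"
    by (intro has_integral_mult_right integrable_integral)
  moreover have "- (of_nat (2 * j + 1) * k) * beta_kernel j (w + 1) t =
                   F t * (of_nat (2 * j + 1) * of_real t ^ (2 * j))" for t
    by (simp add: F_def beta_kernel_def)
  ultimately have "((\<lambda>t. F t * (of_nat (2 * j + 1) * of_real t ^ (2 * j))) has_integral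
               - (of_nat (2 * j + 1) * k) * integral {0..1} (beta_kernel j (w + 1))) {0..1}"
    by simp
  then have "((\<lambda>t. of_real t * of_real (1 - t\<^sup>2) powr w * G t) has_integral
               of_nat (2 * j + 1) * k * integral {0..1} (beta_kernel j (w + 1))) {0..1}"
    using assms F_deriv G_deriv
    by (intro integration_by_parts_interior[OF bounded_bilinear_mult, of 0 1 F G])
       (auto simp: F_def G_def intro!: continuous_intros intro: power_le_one)
  moreover have "of_real t * of_real (1 - t\<^sup>2) powr w * G t = beta_kernel (Suc j) w t" for t
    by (simp add: G_def beta_kernel_def power_add power_mult_distrib mult_ac)
  ultimately show ?thesis by (simp add: k_def)
qed

lemma beta_kernel_0_split:
  assumes "t \<in> {0..1} - {1}"
  shows "beta_kernel 0 w t = beta_kernel 0 (w + 1) t + beta_kernel 1 w t"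
proof -
  define s where "s = complex_of_real (1 - t\<^sup>2)"
  have "t\<^sup>2 < 1" using assms by (simp add: abs_square_less_1)
  then have "s \<noteq> 0" unfolding s_def of_real_eq_0_iff by simp
  then have "s powr (w + 1) = s powr w * s" by (simp add: powr_add)
  moreover have "s powr w = s powr w * (s + of_real t ^ 2)" by (simp add: s_def)
  ultimately show ?thesis
    unfolding beta_kernel_def s_def[symmetric] by (simp add: algebra_simps power2_eq_square)
qed

lemma has_integral_beta_kernel_0:
  assumes "-1 < Re w"
  shows "(beta_kernel 0 w has_integral
           (2 * w + 3) / (2 * w + 2) * integral {0..1} (beta_kernel 0 (w + 1))) {0..1}"
proof -
  define I where "I = integral {0..1} (beta_kernel 0 (w + 1))"
  have "(beta_kernel 0 (w + 1) has_integral I) {0..1}"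
    unfolding I_def using assms
    by (intro integrable_integral integrable_continuous_interval continuous_on_beta_kernel) simp
  moreover have "(beta_kernel 1 w has_integral 1 / (2 * (w + 1)) * I) {0..1}"
    using has_integral_beta_kernel_Suc[OF assms, of 0] by (simp add: I_def)
  ultimately have "((\<lambda>t. beta_kernel 0 (w + 1) t + beta_kernel 1 w t) has_integral
                     I + 1 / (2 * (w + 1)) * I) {0..1}"
    by (rule has_integral_add)
  moreover have "I + 1 / (2 * (w + 1)) * I = (2 * w + 3) / (2 * w + 2) * I"
    using assms by (auto simp: field_simps complex_eq_iff)
  ultimately show ?thesis
    unfolding I_def by (auto intro: has_integral_spike_finite[OF _ beta_kernel_0_split])
qed

lemma beta_kernel_integrable:
  "-1 < Re w \<Longrightarrow> beta_kernel j w integrable_on {0..1}"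
  using has_integral_beta_kernel_0 has_integral_beta_kernel_Suc by (cases j) blast+

lemma Beta_half_rec:
  assumes "-1 < Re w"
  shows "Beta (1/2) (w + 1) = (2 * w + 3) / (2 * w + 2) * Beta (1/2) (w + 1 + 1)"
proof -
  have "(1/2 + (w + 1)) * Beta (1/2) (w + 1 + 1) = (w + 1) * Beta (1/2) (w + 1)"
    using assms by (intro Beta_plus1_right Re_pos_not_nonpos_Ints) simp
  moreover have "w + 1 \<noteq> 0" "2 * w + 2 \<noteq> 0" using assms by (auto simp: complex_eq_iff)
  ultimately show ?thesis by (simp add: field_simps)
qed

lemma same_recurrence_shift:
  fixes f g c :: "complex \<Rightarrow> complex"
  assumes f: "\<And>z. -1 < Re z \<Longrightarrow> f z = c z * f (z + 1)"
    and g: "\<And>z. -1 < Re z \<Longrightarrow> g z = c z * g (z + 1)"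
    and c: "\<And>z. -1 < Re z \<Longrightarrow> c z \<noteq> 0"
    and w: "-1 < Re w"
  shows "f w * g (w + of_nat n) = g w * f (w + of_nat n)"
proof (induction n)
  case (Suc n)
  define z where "z = w + of_nat n"
  have z: "-1 < Re z" using w by (simp add: z_def)
  have "c z * (f w * g (z + 1)) = c z * (g w * f (z + 1))"
    using Suc.IH f[OF z] g[OF z] by (simp add: z_def mult.left_commute)
  then have "f w * g (z + 1) = g w * f (z + 1)" using c[OF z] by simp
  moreover have "z + 1 = w + of_nat (Suc n)" by (simp add: z_def)
  ultimately show ?case by metis
qed simp

lemma Gamma_ratio_asymptotic:
  fixes a b :: "'a :: Gamma"
  assumes a: "a \<notin> \<int>\<^sub>\<le>\<^sub>0" and b: "b \<notin> \<int>\<^sub>\<le>\<^sub>0"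
  shows "(\<lambda>n. Gamma (a + of_nat n) / Gamma (b + of_nat n) * exp ((b - a) * of_real (ln (real n))))
           \<longlonglongrightarrow> 1"
proof -
  have nz: "Gamma a \<noteq> 0" "Gamma b \<noteq> 0" using a b by (simp_all add: Gamma_eq_zero_iff)
  have "(\<lambda>n. Gamma a / Gamma b * (Gamma_series' b n / Gamma_series' a n))
          \<longlonglongrightarrow> Gamma a / Gamma b * (Gamma b / Gamma a)"
    using nz by (intro tendsto_intros Gamma_series'_LIMSEQ)
  moreover have "Gamma a / Gamma b * (Gamma b / Gamma a) = 1" using nz by simp
  moreover have "Gamma a / Gamma b * (Gamma_series' b n / Gamma_series' a n) =
      Gamma (a + of_nat n) / Gamma (b + of_nat n) * exp ((b - a) * of_real (ln (real n)))" for n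
  proof -
    define L :: 'a where "L = of_real (ln (real n))"
    have pa: "pochhammer a n \<noteq> 0" and pb: "pochhammer b n \<noteq> 0"
      using a b pochhammer_eq_0_imp_nonpos_Int by blast+
    have "Gamma_series' b n / Gamma_series' a n = pochhammer a n / pochhammer b n * (exp (b * L) / exp (a * L))"
      using pa pb by (simp add: Gamma_series'_def L_def field_simps)
    also have "exp (b * L) / exp (a * L) = exp ((b - a) * L)"
      by (simp add: left_diff_distrib exp_diff)
    finally show ?thesis
      by (simp add: Gamma_add_of_nat[OF a] Gamma_add_of_nat[OF b] L_def mult_ac)
  qed
  ultimately show ?thesis by simp
qed

lemma Beta_half_ratio_LIMSEQ:
  assumes "-1 < Re w"
  shows "(\<lambda>n. Beta (1/2) (w + of_nat n + 1) / Beta (1/2) (of_nat n + 1)) \<longlonglongrightarrow> 1"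
proof -
  define R where "R a b n = Gamma (a + of_nat n) / Gamma (b + of_nat n) * exp ((b - a) * of_real (ln (real n)))"
    for a b :: complex and n
  have "(\<lambda>n. R (w + 1) (w + 3/2) n / R 1 (3/2) n) \<longlonglongrightarrow> 1 / 1"
    unfolding R_def using assms
    by (intro tendsto_divide Gamma_ratio_asymptotic Re_pos_not_nonpos_Ints) simp_all
  moreover have "R (w + 1) (w + 3/2) n / R 1 (3/2) n =
                   Beta (1/2) (w + of_nat n + 1) / Beta (1/2) (of_nat n + 1)" for n
  proof -
    define E where "E = exp (1/2 * of_real (ln (real n)) :: complex)"
    have shift: "1/2 + (z + 1) = z + 3/2" for z :: complex by simp
    have "R (w + 1) (w + 3/2) n = Gamma (w + of_nat n + 1) / Gamma (w + of_nat n + 3/2) * E"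
      "R 1 (3/2) n = Gamma (of_nat n + 1) / Gamma (of_nat n + 3/2) * E"
      by (simp_all add: R_def E_def add_ac)
    moreover have "Beta (1/2) (z + 1) = Gamma (1/2) * (Gamma (z + 1) / Gamma (z + 3/2))" for z :: complex
      by (simp add: Beta_def shift)
    moreover have "E \<noteq> 0" "Gamma (1/2 :: complex) \<noteq> 0"
      by (auto simp: E_def intro!: Gamma_Re_pos_nonzero)
    ultimately show ?thesis by simp
  qed
  ultimately show ?thesis by simp
qed

lemma norm_powr_sub_one_le:
  fixes w :: complex and s :: real
  assumes s: "0 < s" "s \<le> 1" and w: "-1 \<le> Re w"
  shows "norm (of_real s powr w - 1) \<le> norm w * (1 - s) / s\<^sup>2"
proof -
  have deriv: "((\<lambda>u. complex_of_real u powr w) has_vector_derivative w * of_real u powr (w - 1))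
                 (at u within {s..1})" if "u \<in> {s..1}" for u
  proof -
    have "complex_of_real u \<notin> \<real>\<^sub>\<le>\<^sub>0" using that s by (auto simp: complex_nonpos_Reals_iff)
    then show ?thesis
      by (rule has_vector_derivative_at_within[OF has_vector_derivative_real_field,
            OF has_field_derivative_powr])
  qed
  have int: "((\<lambda>u. w * of_real u powr (w - 1)) has_integral of_real 1 powr w - of_real s powr w)
               (cbox s 1)"
    unfolding cbox_interval by (rule fundamental_theorem_of_calculus) (use s deriv in auto)
  have bound: "norm (w * of_real u powr (w - 1)) \<le> norm w / s\<^sup>2" if u: "u \<in> cbox s 1" for u
  proof -
    have u': "s \<le> u" "u \<le> 1" "0 < u" using u s by auto
    have "norm (w * of_real u powr (w - 1)) = norm w * u powr (Re w - 1)"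
      using u' by (simp add: norm_mult norm_powr_real_powr)
    also have "u powr (Re w - 1) \<le> u powr (-2)"
      using u' w by (intro powr_mono') auto
    also have "u powr (-2) \<le> s powr (-2)"
      using u' s by (intro powr_mono2') auto
    also have "s powr (-2) = 1 / s\<^sup>2"
      using s by (simp add: powr_minus_divide powr_realpow)
    finally show ?thesis by (simp add: mult_left_mono divide_inverse)
  qed
  have "0 \<le> norm w / s\<^sup>2" by simp
  from has_integral_bound[OF this int bound] show ?thesis
    using s by (simp add: norm_minus_commute)
qed

lemma integral_beta_kernel_0_shift:
  assumes "-1 < Re w"
  shows "integral {0..1} (beta_kernel 0 w) * Beta (1/2) (w + of_nat n + 1) =
           Beta (1/2) (w + 1) * integral {0..1} (beta_kernel 0 (w + of_nat n))"
proof (rule same_recurrence_shift[where f = "\<lambda>z. integral {0..1} (beta_kernel 0 z)"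
      and g = "\<lambda>z. Beta (1/2) (z + 1)" and c = "\<lambda>z. (2 * z + 3) / (2 * z + 2)", OF _ _ _ assms])
  fix z :: complex assume z: "-1 < Re z"
  show "integral {0..1} (beta_kernel 0 z) = (2 * z + 3) / (2 * z + 2) * integral {0..1} (beta_kernel 0 (z + 1))"
    using has_integral_beta_kernel_0[OF z] by (rule integral_unique)
  show "Beta (1/2) (z + 1) = (2 * z + 3) / (2 * z + 2) * Beta (1/2) (z + 1 + 1)"
    using z by (rule Beta_half_rec)
  have "2 * z + 3 \<noteq> 0" "2 * z + 2 \<noteq> 0"
    using z by (auto simp: complex_eq_iff)
  then show "(2 * z + 3) / (2 * z + 2) \<noteq> 0" by simp
qed

lemma integral_beta_kernel_0_of_nat:
  "integral {0..1} (beta_kernel 0 (of_nat n)) = Beta (1/2) (of_nat n + 1) / 2"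
proof -
  have eq: "beta_kernel 0 0 t = 1" if "t \<in> {0..1} - {1}" for t
  proof -
    have "t\<^sup>2 < 1" using that by (simp add: abs_square_less_1)
    then have "complex_of_real (1 - t\<^sup>2) \<noteq> 0" by (simp only: of_real_eq_0_iff)
    then show ?thesis by (simp add: beta_kernel_def)
  qed
  have "((\<lambda>t::real. 1) has_integral (1 :: complex)) {0..1}"
    using has_integral_const_real[of "1::complex" 0 1] by simp
  then have "integral {0..1} (beta_kernel 0 0) = 1"
    by (intro integral_unique has_integral_spike_finite[of "{1}", OF _ eq]) simp_all
  moreover have "Beta (1/2) (1 :: complex) = 2"
    using Gamma_plus1[of "1/2 :: complex"] Gamma_Re_pos_nonzero[of "3/2 :: complex"]
    by (simp add: Beta_def Gamma_one_half_complex Re_pos_not_nonpos_Ints field_simps)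
  ultimately show ?thesis
    using integral_beta_kernel_0_shift[of 0 n] by simp
qed

lemma Beta_half_nonzero: "0 < Re z \<Longrightarrow> Beta (1/2) z \<noteq> 0"
  by (simp add: Beta_def Gamma_Re_pos_nonzero)

lemma norm_beta_kernel_0_shift_diff_le:
  assumes t: "t \<in> {0..1}" and w: "-1 \<le> Re w"
  shows "norm (beta_kernel 0 (w + of_nat (m + 2)) t - beta_kernel 0 (of_nat (m + 2)) t)
           \<le> norm w * (t\<^sup>2 * (1 - t\<^sup>2) ^ m)"
proof (cases "t = 1")
  case False
  define s where "s = 1 - t\<^sup>2"
  have s: "0 < s" "s \<le> 1" using t False by (auto simp: s_def abs_square_less_1)
  have sn: "complex_of_real s powr of_nat (m + 2) = of_real s ^ (m + 2)"
    using s by (intro powr_nat') simp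
  have "beta_kernel 0 (w + of_nat (m + 2)) t - beta_kernel 0 (of_nat (m + 2)) t =
          of_real (s ^ (m + 2)) * (of_real s powr w - 1)"
    unfolding beta_kernel_def s_def[symmetric] powr_add sn by (simp add: algebra_simps)
  then have "norm (beta_kernel 0 (w + of_nat (m + 2)) t - beta_kernel 0 (of_nat (m + 2)) t) =
               s ^ (m + 2) * norm (of_real s powr w - 1)"
    using s by (simp add: norm_mult norm_power)
  also have "\<dots> \<le> s ^ (m + 2) * (norm w * (1 - s) / s\<^sup>2)"
    using s w by (intro mult_left_mono norm_powr_sub_one_le) auto
  also have "\<dots> = norm w * ((1 - s) * s ^ m)"
    using s by (simp add: power_add power2_eq_square field_simps)
  finally show ?thesis by (simp add: s_def)
qed (simp add: beta_kernel_def)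

(* Exponent m + 1 rather than m: since 0 powr 0 = 0, the kernel with exponent 0 differs from the
   polynomial at t = 1. *)
lemma has_integral_sq_times_power:
  "((\<lambda>t. t\<^sup>2 * (1 - t\<^sup>2) ^ (m + 1)) has_integral
      Re (integral {0..1} (beta_kernel 0 (of_nat (m + 2)))) / (2 * real m + 4)) {0..1}"
proof -
  have "(beta_kernel 1 (of_nat (m + 1)) has_integral
          1 / (2 * (of_nat m + 2)) * integral {0..1} (beta_kernel 0 (of_nat (m + 2)))) {0..1}"
    using has_integral_beta_kernel_Suc[of "of_nat (m + 1)" 0] by (simp add: add_ac)
  then have "((Re \<circ> beta_kernel 1 (of_nat (m + 1))) has_integral
               Re (1 / (2 * (of_nat m + 2)) * integral {0..1} (beta_kernel 0 (of_nat (m + 2))))) {0..1}"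
    by (rule has_integral_linear[OF _ bounded_linear_Re])
  moreover have "Re \<circ> beta_kernel 1 (of_nat (m + 1)) = (\<lambda>t. t\<^sup>2 * (1 - t\<^sup>2) ^ (m + 1))"
    by (simp add: fun_eq_iff beta_kernel_of_nat del: of_nat_Suc)
  moreover have "Re (1 / (2 * (of_nat m + 2)) * z) = Re z / (2 * real m + 4)" for z
    by (simp add: field_simps)
  ultimately show ?thesis by simp
qed

lemma integral_beta_kernel_0_ratio_bound:
  assumes "-1 < Re w"
  shows "norm (integral {0..1} (beta_kernel 0 (w + of_nat (m + 3))) /
                 integral {0..1} (beta_kernel 0 (of_nat (m + 3))) - 1) \<le> norm w / (real m + 1)"
proof -
  define I where "I z = integral {0..1} (beta_kernel 0 z)" for z
  have J: "((\<lambda>t. norm w * (t\<^sup>2 * (1 - t\<^sup>2) ^ (m + 1))) has_integral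
             norm w * (Re (I (of_nat (m + 2))) / (2 * real m + 4))) {0..1}"
    unfolding I_def by (intro has_integral_mult_right has_integral_sq_times_power)
  have "norm (I (w + of_nat (m + 3)) - I (of_nat (m + 3))) =
          norm (integral {0..1} (\<lambda>t. beta_kernel 0 (w + of_nat (m + 3)) t - beta_kernel 0 (of_nat (m + 3)) t))"
    using assms by (simp add: I_def integral_diff beta_kernel_integrable)
  also have "\<dots> \<le> integral {0..1} (\<lambda>t. norm w * (t\<^sup>2 * (1 - t\<^sup>2) ^ (m + 1)))"
    using assms norm_beta_kernel_0_shift_diff_le[of _ w "m + 1"] J
    by (intro integral_norm_bound_integral integrable_diff beta_kernel_integrable)
       (auto simp: numeral_3_eq_3)
  also have "\<dots> = norm w * (Re (I (of_nat (m + 2))) / (2 * real m + 4))"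
    using J by (rule integral_unique)
  also have "\<dots> \<le> norm w * (norm (I (of_nat (m + 2))) / (2 * real m + 4))"
    by (intro mult_left_mono divide_right_mono complex_Re_le_cmod) auto
  finally have diff: "norm (I (w + of_nat (m + 3)) - I (of_nat (m + 3))) \<le>
                        norm w * (norm (I (of_nat (m + 2))) / (2 * real m + 4))" .
  have "I (of_nat (m + 2)) = of_real ((2 * real m + 7) / (2 * real m + 6)) * I (of_nat (m + 3))"
    using has_integral_beta_kernel_0[of "of_nat (m + 2)"]
    by (simp add: I_def integral_unique add_ac)
  then have rec: "norm (I (of_nat (m + 2))) = (2 * real m + 7) / (2 * real m + 6) * norm (I (of_nat (m + 3)))"
    by (simp only: norm_mult norm_of_real) simp
  have "I (of_nat (m + 3)) \<noteq> 0"
    unfolding I_def integral_beta_kernel_0_of_nat by (simp add: Beta_half_nonzero)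
  then have "norm (I (w + of_nat (m + 3)) / I (of_nat (m + 3)) - 1) =
               norm (I (w + of_nat (m + 3)) - I (of_nat (m + 3))) / norm (I (of_nat (m + 3)))"
    by (simp add: norm_divide [symmetric] diff_divide_distrib)
  also have "\<dots> \<le> norm w * (norm (I (of_nat (m + 2))) / (2 * real m + 4)) / norm (I (of_nat (m + 3)))"
    using diff by (rule divide_right_mono) simp
  also have "\<dots> = norm w * ((2 * real m + 7) / ((2 * real m + 6) * (2 * real m + 4)))"
    using \<open>I (of_nat (m + 3)) \<noteq> 0\<close> unfolding rec
    by (simp add: divide_divide_eq_left mult.assoc [symmetric] nonzero_mult_divide_mult_cancel_right)
  also have "\<dots> \<le> norm w * (1 / (real m + 1))"
  proof (rule mult_left_mono)
    show "(2 * real m + 7) / ((2 * real m + 6) * (2 * real m + 4)) \<le> 1 / (real m + 1)"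
      by (simp add: divide_simps) (simp add: algebra_simps)
  qed simp
  finally show ?thesis by (simp add: I_def)
qed

lemma integral_beta_kernel_0_ratio_LIMSEQ:
  assumes "-1 < Re w"
  shows "(\<lambda>n. integral {0..1} (beta_kernel 0 (w + of_nat n)) /
              integral {0..1} (beta_kernel 0 (of_nat n))) \<longlonglongrightarrow> 1"
proof (rule LIMSEQ_offset[where k = 3])
  have lim: "(\<lambda>m. norm w / (real m + 1)) \<longlonglongrightarrow> 0"
    using LIMSEQ_Suc[OF lim_const_over_n[of "norm w"]] by (simp add: add.commute)
  have "(\<lambda>m. integral {0..1} (beta_kernel 0 (w + of_nat (m + 3))) /
             integral {0..1} (beta_kernel 0 (of_nat (m + 3))) - 1) \<longlonglongrightarrow> 0"
    by (rule Lim_null_comparison[OF always_eventually lim])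
       (use integral_beta_kernel_0_ratio_bound[OF assms] in blast)
  then show "(\<lambda>m. integral {0..1} (beta_kernel 0 (w + of_nat (m + 3))) /
                  integral {0..1} (beta_kernel 0 (of_nat (m + 3)))) \<longlonglongrightarrow> 1"
    by (simp add: LIM_zero_iff)
qed

(* Both sides satisfy f w = (2w + 3) / (2w + 2) * f (w + 1) and agree at the natural numbers;
   as f (w + n) / f n tends to 1 for both, they agree everywhere. *)
lemma integral_beta_kernel_0:
  assumes w: "-1 < Re w"
  shows "integral {0..1} (beta_kernel 0 w) = Beta (1/2) (w + 1) / 2"
proof -
  define f where "f z = integral {0..1} (beta_kernel 0 z)" for z
  define B where "B z = Beta (1/2) (z + 1)" for z :: complex
  have "f w * (B (w + of_nat n) / B (of_nat n)) = B w / 2 * (f (w + of_nat n) / f (of_nat n))" for n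
  proof -
    have "B (of_nat n) \<noteq> 0" "f (of_nat n) = B (of_nat n) / 2"
      by (simp_all add: B_def f_def Beta_half_nonzero integral_beta_kernel_0_of_nat)
    moreover have "f w * B (w + of_nat n) = B w * f (w + of_nat n)"
      unfolding f_def B_def using integral_beta_kernel_0_shift[OF w] by simp
    ultimately show ?thesis by (simp add: field_simps)
  qed
  moreover have "(\<lambda>n. f w * (B (w + of_nat n) / B (of_nat n))) \<longlonglongrightarrow> f w * 1"
    unfolding B_def using Beta_half_ratio_LIMSEQ[OF w] by (intro tendsto_intros) simp
  moreover have "(\<lambda>n. B w / 2 * (f (w + of_nat n) / f (of_nat n))) \<longlonglongrightarrow> B w / 2 * 1"
    unfolding f_def using integral_beta_kernel_0_ratio_LIMSEQ[OF w] by (intro tendsto_intros)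
  ultimately show ?thesis
    using LIMSEQ_unique by (fastforce simp: f_def B_def)
qed

theorem has_integral_beta_kernel:
  assumes "-1 < Re w"
  shows "(beta_kernel j w has_integral Beta (of_nat j + 1/2) (w + 1) / 2) {0..1}"
  using assms
proof (induction j arbitrary: w)
  case 0
  have "(beta_kernel 0 w has_integral integral {0..1} (beta_kernel 0 w)) {0..1}"
    using beta_kernel_integrable[OF 0] by (rule integrable_integral)
  then show ?case
    using integral_beta_kernel_0[OF 0] by simp
next
  case (Suc j)
  define x :: complex where "x = of_nat j + 1/2"
  have "-1 < Re (w + 1)" using Suc.prems by simp
  then have IH: "integral {0..1} (beta_kernel j (w + 1)) = Beta x (w + 1 + 1) / 2"
    using Suc.IH x_def by (blast intro: integral_unique)
  have x: "x \<notin> \<int>\<^sub>\<le>\<^sub>0" "w + 1 \<notin> \<int>\<^sub>\<le>\<^sub>0"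
    using Suc.prems by (auto simp: x_def intro!: Re_pos_not_nonpos_Ints)
  have nz: "x + (w + 1) \<noteq> 0" "w + 1 \<noteq> 0"
    using Suc.prems by (auto simp: x_def complex_eq_iff)
  have "(x + (w + 1)) * Beta (x + 1) (w + 1) = x * Beta x (w + 1)"
    using x(1) by (rule Beta_plus1_left)
  then have B1: "Beta (x + 1) (w + 1) = x * Beta x (w + 1) / (x + (w + 1))"
    using nz by (simp add: eq_divide_eq mult.commute)
  have "(x + (w + 1)) * Beta x (w + 1 + 1) = (w + 1) * Beta x (w + 1)"
    using x(2) by (rule Beta_plus1_right)
  then have B2: "Beta x (w + 1 + 1) = (w + 1) * Beta x (w + 1) / (x + (w + 1))"
    using nz by (simp add: eq_divide_eq mult.commute)
  have "of_nat (2 * j + 1) / (2 * (w + 1)) = (of_nat (2 * j + 1) / 2) / (w + 1)"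
    by (simp only: divide_divide_eq_left)
  also have "of_nat (2 * j + 1) / 2 = x"
    by (simp add: x_def add_divide_distrib)
  finally have "of_nat (2 * j + 1) / (2 * (w + 1)) * (Beta x (w + 1 + 1) / 2) = Beta (x + 1) (w + 1) / 2"
    using nz unfolding B1 B2 by simp
  moreover have "of_nat (Suc j) + 1/2 = x + 1"
    by (simp add: x_def)
  ultimately show ?case
    using has_integral_beta_kernel_Suc[OF Suc.prems, of j] by (simp only: IH)
qed

lemma pochhammer_minus_of_nat:
  "pochhammer (- of_nat m :: 'a :: field_char_0) k = (-1) ^ k * fact k * of_nat (m choose k)"
proof -
  have "fact k * of_nat (m choose k) = (-1) ^ k * pochhammer (- of_nat m :: 'a) k"
    using gbinomial_pochhammer[of "of_nat m :: 'a" k] by (simp add: binomial_gbinomial)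
  then have "(-1) ^ k * (fact k * of_nat (m choose k)) = (-1) ^ (k + k) * pochhammer (- of_nat m :: 'a) k"
    by (simp add: power_add)
  then show ?thesis by (simp add: mult.assoc)
qed

lemma pochhammer_add_Chu_Vandermonde:
  fixes c :: "'a :: field_char_0"
  assumes c: "c \<notin> \<int>\<^sub>\<le>\<^sub>0"
  shows "pochhammer c (m + n) = pochhammer c m * pochhammer c n *
           (\<Sum>k\<le>n. of_nat (m choose k) * of_nat (n choose k) * fact k / pochhammer c k)"
proof -
  have "\<forall>i\<in>{0..<n}. c \<noteq> - of_nat i" using c by auto
  from Vandermonde_pochhammer[OF this, of "- of_nat m"]
  have "(\<Sum>k\<le>n. of_nat (m choose k) * of_nat (n choose k) * fact k / pochhammer c k) =
          pochhammer (c + of_nat m) n / pochhammer c n"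
    by (simp add: pochhammer_minus_of_nat atLeast0AtMost field_simps flip: power_add mult_2)
  moreover have "pochhammer c n \<noteq> 0"
    using c pochhammer_eq_0_imp_nonpos_Int by blast
  ultimately show ?thesis
    by (simp add: pochhammer_product')
qed

lemma summable_norm_ratio_bound:
  fixes f :: "nat \<Rightarrow> 'a :: real_normed_vector"
  assumes "\<And>n. 1 \<le> n \<Longrightarrow> norm (f (Suc n)) \<le> B / (real n + 1) * norm (f n)"
  shows "summable (\<lambda>n. norm (f n))"
proof (rule summable_ratio_test[where c = "1/2" and N = "max 1 (nat \<lceil>2 * B\<rceil>)"])
  fix n assume n: "max 1 (nat \<lceil>2 * B\<rceil>) \<le> n"
  then have "B / (real n + 1) \<le> 1/2"
    by (simp add: divide_le_eq)
  then have "B / (real n + 1) * norm (f n) \<le> 1/2 * norm (f n)"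
    by (rule mult_right_mono) simp
  moreover have "norm (f (Suc n)) \<le> B / (real n + 1) * norm (f n)"
    using n by (intro assms) simp
  ultimately show "norm (norm (f (Suc n))) \<le> 1/2 * norm (norm (f n))"
    by (simp only: real_norm_def abs_norm_cancel)
qed simp

definition bessel_coeff :: "complex \<Rightarrow> real \<Rightarrow> nat \<Rightarrow> complex" where
  "bessel_coeff \<nu> u m = (-1) ^ m * of_real (u ^ (2 * m)) / (fact m * Gamma (of_nat m + \<nu> + 1))"

lemma summable_norm_bessel_coeff:
  assumes "-1 < Re \<nu>"
  shows "summable (\<lambda>m. norm (bessel_coeff \<nu> u m))"
proof (rule summable_norm_ratio_bound[where B = "u\<^sup>2"])
  fix n :: nat assume n: "1 \<le> n"
  define z where "z = of_nat n + \<nu> + 1"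
  have z: "1 \<le> norm z"
    using complex_Re_le_cmod[of z] assms n by (simp add: z_def)
  have "Gamma (of_nat (Suc n) + \<nu> + 1) = z * Gamma z"
    using Gamma_plus1[of z] assms by (simp add: z_def add_ac Re_pos_not_nonpos_Ints)
  moreover have "Gamma (of_nat n + \<nu> + 1) = Gamma z" by (simp add: z_def)
  moreover have "z \<noteq> 0" using z by auto
  ultimately have "bessel_coeff \<nu> u (Suc n) * (of_nat (Suc n) * z) = - of_real (u\<^sup>2) * bessel_coeff \<nu> u n"
    unfolding bessel_coeff_def
    by (simp add: field_simps power_add power_mult_distrib power2_eq_square del: of_nat_Suc)
  then have "norm (bessel_coeff \<nu> u (Suc n)) * ((real n + 1) * norm z) = u\<^sup>2 * norm (bessel_coeff \<nu> u n)"
    by (metis norm_mult norm_minus_cancel norm_of_nat norm_of_real abs_power2 of_nat_Suc add.commute)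
  moreover have "norm (bessel_coeff \<nu> u (Suc n)) * (real n + 1) \<le>
                   norm (bessel_coeff \<nu> u (Suc n)) * ((real n + 1) * norm z)"
    using z by (intro mult_left_mono) (simp_all add: mult_le_cancel_left1)
  ultimately have "norm (bessel_coeff \<nu> u (Suc n)) * (real n + 1) \<le> u\<^sup>2 * norm (bessel_coeff \<nu> u n)"
    by simp
  then show "norm (bessel_coeff \<nu> u (Suc n)) \<le> u\<^sup>2 / (real n + 1) * norm (bessel_coeff \<nu> u n)"
    by (simp add: field_simps)
qed

lemma besselJ_of_real_double:
  assumes "0 < u" "-1 < Re \<nu>"
  shows "besselJ \<nu> (of_real (2 * u)) = of_real u powr \<nu> * (\<Sum>m. bessel_coeff \<nu> u m)"
proof -
  have "(-1) ^ m * (of_real (2 * u) / 2) powr (2 * of_nat m + \<nu>) / (fact m * Gamma (of_nat m + \<nu> + 1))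
          = of_real u powr \<nu> * bessel_coeff \<nu> u m" for m
  proof -
    have "complex_of_real u powr of_nat (2 * m) = of_real u ^ (2 * m)"
      using assms(1) by (intro powr_nat') simp
    then have "complex_of_real u powr (2 * of_nat m + \<nu>) = of_real u ^ (2 * m) * of_real u powr \<nu>"
      by (simp add: powr_add)
    then show ?thesis by (simp add: bessel_coeff_def)
  qed
  moreover have "summable (bessel_coeff \<nu> u)"
    using summable_norm_bessel_coeff[OF assms(2)] by (rule summable_norm_cancel)
  ultimately show ?thesis
    by (simp add: besselJ_def suminf_mult)
qed

(* The common summand of both triple series: (k, p, q) receives a share of the product of the
   Bessel coefficients of orders k + p and k + q, and of the (j, k) term of the integrated series
   with j = p + q. *)
definition bessel_product_term :: "complex \<Rightarrow> real \<Rightarrow> real \<Rightarrow> nat \<times> nat \<times> nat \<Rightarrow> complex" where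
  "bessel_product_term \<nu> u v = (\<lambda>(k, p, q). (-1) ^ (p + q) * of_real (u ^ (2 * (k + p)) * v ^ (2 * (k + q))) /
      (Gamma (of_nat (2 * k + p + q) + \<nu> + 1) * fact k * fact p * fact q * Gamma (of_nat k + \<nu> + 1)))"

lemma bessel_coeff_mult:
  assumes "-1 < Re \<nu>"
  shows "bessel_coeff \<nu> u m * bessel_coeff \<nu> v n =
           (\<Sum>k\<le>min m n. bessel_product_term \<nu> u v (k, m - k, n - k))"
proof -
  define c where "c = \<nu> + 1"
  have c: "c \<notin> \<int>\<^sub>\<le>\<^sub>0" using assms by (simp add: c_def Re_pos_not_nonpos_Ints)
  have Gc: "Gamma c \<noteq> 0" using c by (simp add: Gamma_eq_zero_iff)
  have P: "pochhammer c j \<noteq> 0" for j using c pochhammer_eq_0_imp_nonpos_Int by blast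
  have G: "Gamma (of_nat j + \<nu> + 1) = pochhammer c j * Gamma c" for j
    using Gamma_add_of_nat[OF c, of j] by (simp add: c_def add_ac)
  define K where "K = (-1) ^ (m + n) * of_real (u ^ (2 * m) * v ^ (2 * n)) /
                        ((Gamma c)\<^sup>2 * pochhammer c (m + n) * fact m * fact n)"
  have summand: "bessel_product_term \<nu> u v (k, m - k, n - k) =
                K * (of_nat (m choose k) * of_nat (n choose k) * fact k / pochhammer c k)"
    if "k \<le> min m n" for k
  proof -
    from that have km: "k \<le> m" "k \<le> n" by auto
    then have "m + n = (m - k) + (n - k) + 2 * k" by simp
    then have "(-1 :: complex) ^ (m + n) = (-1) ^ ((m - k) + (n - k)) * ((-1)\<^sup>2) ^ k"
      by (simp only: power_add power_mult)
    then have "(-1 :: complex) ^ ((m - k) + (n - k)) = (-1) ^ (m + n)"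
      by simp
    moreover have "2 * k + (m - k) + (n - k) = m + n" "k + (m - k) = m" "k + (n - k) = n"
      using km by auto
    ultimately have "bessel_product_term \<nu> u v (k, m - k, n - k) =
        (-1) ^ (m + n) * of_real (u ^ (2 * m) * v ^ (2 * n)) /
        (pochhammer c (m + n) * Gamma c * fact k * fact (m - k) * fact (n - k) * (pochhammer c k * Gamma c))"
      unfolding bessel_product_term_def prod.case by (simp only: G)
    also have "\<dots> = K * (of_nat (m choose k) * of_nat (n choose k) * fact k / pochhammer c k)"
      using Gc P by (simp add: K_def binomial_fact km field_simps power2_eq_square)
    finally show ?thesis .
  qed
  have "(\<Sum>k\<le>min m n. bessel_product_term \<nu> u v (k, m - k, n - k)) =
          (\<Sum>k\<le>min m n. K * (of_nat (m choose k) * of_nat (n choose k) * fact k / pochhammer c k))"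
    by (rule sum.cong) (simp_all add: summand)
  also have "\<dots> = (\<Sum>k\<le>n. K * (of_nat (m choose k) * of_nat (n choose k) * fact k / pochhammer c k))"
    by (rule sum.mono_neutral_left) auto
  also have "\<dots> = K * (\<Sum>k\<le>n. of_nat (m choose k) * of_nat (n choose k) * fact k / pochhammer c k)"
    by (simp add: sum_distrib_left)
  also have "\<dots> = K * (pochhammer c (m + n) / (pochhammer c m * pochhammer c n))"
    using pochhammer_add_Chu_Vandermonde[OF c, of m n] P by (simp add: field_simps)
  also have "\<dots> = bessel_coeff \<nu> u m * bessel_coeff \<nu> v n"
    using Gc P unfolding K_def bessel_coeff_def G by (simp add: field_simps power2_eq_square power_add)
  finally show ?thesis ..
qed

lemma has_integral_suminf_dominated:
  fixes g :: "nat \<Rightarrow> 'n::euclidean_space \<Rightarrow> 'm::euclidean_space"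
  assumes g: "\<And>n. (g n has_integral I n) S"
    and h: "h integrable_on S" and a: "summable a"
    and bound: "\<And>n x. x \<in> S \<Longrightarrow> norm (g n x) \<le> a n * h x"
    and f: "\<And>x. x \<in> S \<Longrightarrow> (\<lambda>n. g n x) sums f x"
  shows "(f has_integral (\<Sum>n. I n)) S"
proof (rule has_integral_dominated_convergence)
  show "((\<lambda>x. \<Sum>n<k. g n x) has_integral (\<Sum>n<k. I n)) S" for k
    by (intro has_integral_sum g) simp
  show "(\<lambda>x. (\<Sum>n. a n) * h x) integrable_on S"
    using integrable_cmul[OF h, of "\<Sum>n. a n"] by simp
  show "\<forall>x\<in>S. norm (\<Sum>n<k. g n x) \<le> (\<Sum>n. a n) * h x" for k
  proof
    fix x assume x: "x \<in> S"
    have nonneg: "0 \<le> a n * h x" for n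
      using bound[OF x, of n] norm_ge_zero order_trans by blast
    have "norm (\<Sum>n<k. g n x) \<le> (\<Sum>n<k. a n * h x)"
      by (intro order_trans[OF norm_sum] sum_mono bound x)
    also have "\<dots> \<le> (\<Sum>n. a n * h x)"
      using a nonneg by (intro sum_le_suminf summable_mult2) auto
    finally show "norm (\<Sum>n<k. g n x) \<le> (\<Sum>n. a n) * h x"
      using a by (simp add: suminf_mult2)
  qed
  show "\<forall>x\<in>S. (\<lambda>k. \<Sum>n<k. g n x) \<longlonglongrightarrow> f x"
    using f by (simp add: sums_def)
  have "norm (I n) \<le> a n * integral S h" for n
  proof -
    have "norm (I n) = norm (integral S (g n))"
      using integral_unique[OF g[of n]] by simp
    also have "\<dots> \<le> integral S (\<lambda>x. a n * h x)"
      using g bound integrable_cmul[OF h, of "a n"] by (intro integral_norm_bound_integral) auto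
    finally show ?thesis by simp
  qed
  then have "summable I"
    by (rule summable_comparison_test'[OF summable_mult2[OF a]])
  then show "(\<lambda>k. \<Sum>n<k. I n) \<longlonglongrightarrow> (\<Sum>n. I n)"
    by (rule summable_LIMSEQ)
qed

lemma summable_norm_hyp0F3_series:
  assumes "0 < Re b1" "0 < Re b2" "0 < Re b3"
  shows "summable (\<lambda>k. norm (w ^ k / (pochhammer b1 k * pochhammer b2 k * pochhammer b3 k * fact k)))"
proof (rule summable_norm_ratio_bound[where B = "norm w"])
  fix n :: nat assume n: "1 \<le> n"
  define D where "D k = pochhammer b1 k * pochhammer b2 k * pochhammer b3 k * fact k" for k
  have one: "1 \<le> norm (b + of_nat n)" if "0 < Re b" for b :: complex
    using complex_Re_le_cmod[of "b + of_nat n"] that n by simp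
  have "D (Suc n) = D n * ((b1 + of_nat n) * (b2 + of_nat n) * (b3 + of_nat n) * of_nat (Suc n))"
    by (simp add: D_def pochhammer_rec' mult_ac)
  then have "norm (D (Suc n)) =
               norm (D n) * (norm (b1 + of_nat n) * norm (b2 + of_nat n) * norm (b3 + of_nat n)) * (real n + 1)"
    by (simp add: norm_mult mult_ac flip: of_nat_Suc)
  moreover have "1 \<le> norm (b1 + of_nat n) * norm (b2 + of_nat n) * norm (b3 + of_nat n)"
    using one assms by (intro mult_ge1_I) auto
  then have "norm (D n) * 1 * (real n + 1) \<le>
               norm (D n) * (norm (b1 + of_nat n) * norm (b2 + of_nat n) * norm (b3 + of_nat n)) * (real n + 1)"
    by (intro mult_right_mono mult_left_mono) auto
  ultimately have "norm (D n) * (real n + 1) \<le> norm (D (Suc n))"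
    by simp
  moreover have "0 < norm (D n) * (real n + 1)"
    using assms by (simp add: D_def pochhammer_Re_pos_nonzero)
  ultimately have "norm w * norm w ^ n / norm (D (Suc n)) \<le>
                     norm w * norm w ^ n / ((real n + 1) * norm (D n))"
    by (intro divide_left_mono mult_pos_pos) (auto simp: mult.commute)
  also have "\<dots> = norm w / (real n + 1) * norm (w ^ n / D n)"
    by (simp only: norm_divide norm_power times_divide_times_eq)
  finally show "norm (w ^ Suc n / D (Suc n)) \<le> norm w / (real n + 1) * norm (w ^ n / D n)"
    by (simp only: norm_divide norm_mult norm_power power_Suc)
qed

lemma hyp0F3_sums:
  assumes "0 < Re b1" "0 < Re b2" "0 < Re b3"
  shows "(\<lambda>k. w ^ k / (pochhammer b1 k * pochhammer b2 k * pochhammer b3 k * fact k)) sums hyp0F3 b1 b2 b3 w"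
  unfolding hyp0F3_def
  using summable_norm_cancel[OF summable_norm_hyp0F3_series[OF assms]] by (rule summable_sums)

lemma integrable_one_minus_sq_powr:
  fixes r :: real
  assumes "-1 < r"
  shows "(\<lambda>t. (1 - t\<^sup>2) powr r) integrable_on {0..1}"
proof -
  have "(Re \<circ> beta_kernel 0 (of_real r)) integrable_on {0..1}"
    using beta_kernel_integrable[of "of_real r" 0] assms
    by (auto simp: integrable_on_def intro: has_integral_linear[OF _ bounded_linear_Re])
  moreover have "(Re \<circ> beta_kernel 0 (of_real r)) t = (1 - t\<^sup>2) powr r" if "t \<in> {0..1}" for t
    using that powr_of_real[of "1 - t\<^sup>2" r]
    by (simp add: beta_kernel_def power_le_one del: of_real_diff of_real_power)
  ultimately show ?thesis by (rule integrable_eq)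
qed

lemma norm_beta_kernel_le:
  assumes "t \<in> {0..1}" "r \<le> Re w"
  shows "norm (beta_kernel j w t) \<le> (1 - t\<^sup>2) powr r"
proof -
  have "t ^ (2 * j) * (1 - t\<^sup>2) powr Re w \<le> 1 * (1 - t\<^sup>2) powr r"
    using assms by (intro mult_mono power_le_one powr_mono') (auto intro: power_le_one)
  then show ?thesis using assms(1) by (simp add: norm_beta_kernel)
qed

lemma summable_norm_cos_coeff:
  "summable (\<lambda>j. norm ((-1) ^ j * complex_of_real (C ^ (2 * j)) / fact (2 * j)))"
proof (rule summable_comparison_test'[OF summable_exp[of "C\<^sup>2"]])
  fix j :: nat
  have "norm ((-1) ^ j * complex_of_real (C ^ (2 * j)) / fact (2 * j)) = (C\<^sup>2) ^ j / fact (2 * j)"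
    by (simp add: norm_divide norm_mult norm_power power_mult)
  also have "\<dots> \<le> (C\<^sup>2) ^ j / fact j"
    by (intro divide_left_mono fact_mono) auto
  finally show "norm (norm ((-1) ^ j * complex_of_real (C ^ (2 * j)) / fact (2 * j))) \<le>
                  inverse (fact j) * (C\<^sup>2) ^ j"
    by (simp add: divide_inverse mult.commute)
qed

lemma has_integral_beta_kernel_cos:
  assumes w: "-1 < Re w"
  shows "((\<lambda>t. beta_kernel 0 w t * of_real (cos (C * t))) has_integral
           (\<Sum>j. (-1) ^ j * of_real (C ^ (2 * j)) / fact (2 * j) * (Beta (of_nat j + 1/2) (w + 1) / 2))) {0..1}"
proof (rule has_integral_suminf_dominated[OF _ integrable_one_minus_sq_powr[OF w] summable_norm_cos_coeff])
  define c :: "nat \<Rightarrow> complex" where "c j = (-1) ^ j * of_real (C ^ (2 * j)) / fact (2 * j)" for j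
  show "((\<lambda>t. c j * beta_kernel j w t) has_integral c j * (Beta (of_nat j + 1/2) (w + 1) / 2)) {0..1}" for j
    using w by (intro has_integral_mult_right has_integral_beta_kernel)
  show "norm (c j * beta_kernel j w t) \<le> norm (c j) * (1 - t\<^sup>2) powr Re w" if "t \<in> {0..1}" for j t
    using norm_beta_kernel_le[OF that order_refl] by (simp add: norm_mult mult_left_mono)
  show "(\<lambda>j. c j * beta_kernel j w t) sums (beta_kernel 0 w t * of_real (cos (C * t)))" for t
  proof -
    have "(\<lambda>j. of_real ((-1) ^ j / fact (2 * j) * (C * t) ^ (2 * j))) sums complex_of_real (cos (C * t))"
      by (rule sums_of_real[OF cos_paired])
    moreover have "of_real ((-1) ^ j / fact (2 * j) * (C * t) ^ (2 * j)) = c j * of_real t ^ (2 * j)" for j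
      by (simp add: c_def power_mult_distrib)
    ultimately have "(\<lambda>j. beta_kernel 0 w t * (c j * of_real t ^ (2 * j))) sums
                       (beta_kernel 0 w t * of_real (cos (C * t)))"
      by (intro sums_mult) simp
    then show ?thesis by (simp add: beta_kernel_def mult_ac)
  qed
qed

theorem has_integral_cos_hyp0F3:
  fixes \<alpha> b1 b2 b3 :: complex and A C :: real
  assumes \<alpha>: "-1 < Re \<alpha>" and b: "0 < Re b1" "0 < Re b2" "0 < Re b3"
  defines "D k \<equiv> pochhammer b1 k * pochhammer b2 k * pochhammer b3 k * fact k"
  shows "((\<lambda>t. of_real (1 - t\<^sup>2) powr \<alpha> * of_real (cos (C * t)) *
              hyp0F3 b1 b2 b3 (of_real (A * (1 - t\<^sup>2)\<^sup>2))) has_integral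
           (\<Sum>k. of_real (A ^ k) / D k *
              (\<Sum>j. (-1) ^ j * of_real (C ^ (2 * j)) / fact (2 * j) *
                 (Beta (of_nat j + 1/2) (\<alpha> + of_nat (2 * k) + 1) / 2)))) {0..1}"
proof (rule has_integral_suminf_dominated[OF _ integrable_one_minus_sq_powr[of "Re \<alpha>"]])
  define d where "d k = of_real (A ^ k) / D k" for k
  define h where "h k t = d k * (beta_kernel 0 (\<alpha> + of_nat (2 * k)) t * of_real (cos (C * t)))" for k t
  show "(h k has_integral d k * (\<Sum>j. (-1) ^ j * of_real (C ^ (2 * j)) / fact (2 * j) *
          (Beta (of_nat j + 1/2) (\<alpha> + of_nat (2 * k) + 1) / 2))) {0..1}" for k
    unfolding h_def using \<alpha> by (intro has_integral_mult_right has_integral_beta_kernel_cos) simp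
  show "summable (\<lambda>k. norm (d k))"
    unfolding d_def D_def using summable_norm_hyp0F3_series[OF b, of "of_real A"] by simp
  show "norm (h k t) \<le> norm (d k) * (1 - t\<^sup>2) powr Re \<alpha>" if "t \<in> {0..1}" for k t
    using norm_beta_kernel_le[OF that, of "Re \<alpha>" "\<alpha> + of_nat (2 * k)" 0]
    by (auto simp: h_def norm_mult intro!: mult_left_mono order_trans[OF mult_left_le] abs_cos_le_one)
  show "(\<lambda>k. h k t) sums (of_real (1 - t\<^sup>2) powr \<alpha> * of_real (cos (C * t)) *
                             hyp0F3 b1 b2 b3 (of_real (A * (1 - t\<^sup>2)\<^sup>2)))"
    if "t \<in> {0..1}" for t
  proof (cases "t = 1")
    case True
    then show ?thesis by (simp add: h_def beta_kernel_def)
  next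
    case False
    define s where "s = complex_of_real (1 - t\<^sup>2)"
    have "t\<^sup>2 < 1" using that False by (simp add: abs_square_less_1)
    then have "s \<noteq> 0" unfolding s_def of_real_eq_0_iff by simp
    have "beta_kernel 0 (\<alpha> + of_nat (2 * k)) t = s powr \<alpha> * s ^ (2 * k)" for k
    proof -
      have "s powr of_nat (2 * k) = s ^ (2 * k)"
        using \<open>s \<noteq> 0\<close> by (rule powr_nat'[OF disjI1])
      then show ?thesis
        unfolding beta_kernel_def s_def[symmetric] powr_add by simp
    qed
    then have h: "h k t = s powr \<alpha> * of_real (cos (C * t)) * ((of_real A * s\<^sup>2) ^ k / D k)" for k
      by (simp add: h_def d_def power_mult_distrib power_mult power2_eq_square mult_ac)
    have "(\<lambda>k. (of_real A * s\<^sup>2) ^ k / D k) sums hyp0F3 b1 b2 b3 (of_real A * s\<^sup>2)"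
      unfolding D_def by (rule hyp0F3_sums[OF b])
    then have "(\<lambda>k. h k t) sums (s powr \<alpha> * of_real (cos (C * t)) * hyp0F3 b1 b2 b3 (of_real A * s\<^sup>2))"
      unfolding h by (rule sums_mult)
    then show ?thesis by (simp add: s_def)
  qed
qed (use \<alpha> in simp)

lemma Gamma_of_nat_plus_half:
  "Gamma (of_nat j + 1/2 :: complex) = fact (2 * j) * of_real (sqrt pi) / (4 ^ j * fact j)"
proof -
  have "Gamma (1/2 + of_nat j :: complex) = pochhammer (1/2) j * of_real (sqrt pi)"
    using Gamma_add_of_nat[of "1/2 :: complex" j] by (simp add: Gamma_one_half_complex Re_pos_not_nonpos_Ints)
  moreover have "(fact (2 * j) :: complex) = 4 ^ j * pochhammer (1/2) j * fact j"
    using pochhammer_double[of "1/2 :: complex" j] by (simp add: pochhammer_fact power_mult)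
  ultimately show ?thesis by (simp add: add.commute field_simps)
qed

lemma Gamma_plus_even_nat:
  assumes "-1/2 < Re \<nu>"
  shows "Gamma (\<nu> + 1/2 + of_nat (2 * k)) =
           4 ^ k * pochhammer (\<nu>/2 + 1/4) k * pochhammer (\<nu>/2 + 3/4) k * Gamma (\<nu> + 1/2)"
proof -
  have "Gamma (\<nu> + 1/2 + of_nat (2 * k)) = pochhammer (\<nu> + 1/2) (2 * k) * Gamma (\<nu> + 1/2)"
    using assms by (intro Gamma_add_of_nat Re_pos_not_nonpos_Ints) simp
  moreover have "pochhammer (2 * (\<nu>/2 + 1/4)) (2 * k) =
                   of_nat (2 ^ (2 * k)) * pochhammer (\<nu>/2 + 1/4) k * pochhammer (\<nu>/2 + 1/4 + 1/2) k"
    by (rule pochhammer_double)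
  moreover have "2 * (\<nu>/2 + 1/4) = \<nu> + 1/2" "\<nu>/2 + 1/4 + 1/2 = \<nu>/2 + 3/4" by simp_all
  ultimately show ?thesis by (simp add: power_mult)
qed

lemma Legendre_duplication_constant:
  assumes "-1/2 < Re \<nu>"
  shows "2 * of_real 4 powr \<nu> / (of_real pi * Gamma (2 * \<nu> + 1)) =
           2 / (of_real (sqrt pi) * Gamma (\<nu> + 1/2) * Gamma (\<nu> + 1))"
proof -
  define E where "E = exp (- (2 * \<nu>) * of_real (ln 2))"
  have "Gamma (\<nu> + 1/2) * Gamma (\<nu> + 1/2 + 1/2) =
          exp ((1 - 2 * (\<nu> + 1/2)) * of_real (ln 2)) * of_real (sqrt pi) * Gamma (2 * (\<nu> + 1/2))"
    using assms by (intro Gamma_legendre_duplication Re_pos_not_nonpos_Ints) simp_all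
  moreover have "\<nu> + 1/2 + 1/2 = \<nu> + 1" "1 - 2 * (\<nu> + 1/2) = - (2 * \<nu>)" "2 * (\<nu> + 1/2) = 2 * \<nu> + 1"
    by simp_all
  ultimately have dup: "Gamma (\<nu> + 1/2) * Gamma (\<nu> + 1) = E * of_real (sqrt pi) * Gamma (2 * \<nu> + 1)"
    by (simp only: E_def)
  have "Ln (of_real 4) = 2 * of_real (ln 2)"
    using Ln_of_real[of 4] ln_realpow[of 2 2] by simp
  then have E: "of_real 4 powr \<nu> * E = 1"
    by (simp add: E_def powr_def mult.commute flip: exp_add)
  have "Gamma (\<nu> + 1/2) \<noteq> 0" "Gamma (\<nu> + 1) \<noteq> 0" "Gamma (2 * \<nu> + 1) \<noteq> 0" "E \<noteq> 0"
    using assms by (auto simp: E_def intro!: Gamma_Re_pos_nonzero)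
  moreover have "of_real pi = of_real (sqrt pi) * (of_real (sqrt pi) :: complex)"
    by (simp flip: of_real_mult)
  ultimately show ?thesis
    using dup E by (simp add: field_simps)
qed

lemma Beta_half_even_shift:
  assumes "-1/2 < Re \<nu>"
  shows "Beta (of_nat j + 1/2) (\<nu> - 1/2 + of_nat (2 * k) + 1) =
           fact (2 * j) * of_real (sqrt pi) * 4 ^ k * pochhammer (\<nu>/2 + 1/4) k *
           pochhammer (\<nu>/2 + 3/4) k * Gamma (\<nu> + 1/2) /
           (4 ^ j * fact j * Gamma (of_nat (2 * k + j) + \<nu> + 1))"
proof -
  have e1: "\<nu> - 1/2 + of_nat (2 * k) + 1 = \<nu> + 1/2 + of_nat (2 * k)"
    and e2: "of_nat j + 1/2 + (\<nu> + 1/2 + of_nat (2 * k)) = of_nat (2 * k + j) + \<nu> + 1"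
    by simp_all
  show ?thesis
    unfolding e1 Beta_def e2 Gamma_of_nat_plus_half Gamma_plus_even_nat[OF assms]
    by (simp add: ac_simps)
qed

lemma bessel_product_term_factorization:
  assumes \<nu>: "-1/2 < Re \<nu>"
  shows "2 * of_real 4 powr \<nu> / (of_real pi * Gamma (2 * \<nu> + 1)) *
     ((-1) ^ (p + q) * 4 ^ (p + q) * of_nat ((p + q) choose p) * of_real (u ^ (2 * p) * v ^ (2 * q)) /
        fact (2 * (p + q))) *
     (of_real ((u\<^sup>2 * v\<^sup>2 / 4) ^ k) /
        (pochhammer (\<nu> + 1) k * pochhammer (\<nu>/2 + 1/4) k * pochhammer (\<nu>/2 + 3/4) k * fact k)) *
     (Beta (of_nat (p + q) + 1/2) (\<nu> - 1/2 + of_nat (2 * k) + 1) / 2) =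
     bessel_product_term \<nu> u v (k, p, q)"
proof -
  define sp where "sp = complex_of_real (sqrt pi)"
  define G1 where "G1 = Gamma (\<nu> + 1/2)"
  define G2 where "G2 = Gamma (\<nu> + 1)"
  define GN where "GN = Gamma (of_nat (2 * k + p + q) + \<nu> + 1)"
  define Q1 where "Q1 = pochhammer (\<nu>/2 + 1/4) k"
  define Q2 where "Q2 = pochhammer (\<nu>/2 + 3/4) k"
  define P where "P = pochhammer (\<nu> + 1) k"
  define Y where "Y = complex_of_real (u ^ (2 * p) * v ^ (2 * q))"
  define Z where "Z = complex_of_real ((u\<^sup>2 * v\<^sup>2 / 4) ^ k)"
  have nz: "sp \<noteq> 0" "G1 \<noteq> 0" "G2 \<noteq> 0" "GN \<noteq> 0" "Q1 \<noteq> 0" "Q2 \<noteq> 0" "P \<noteq> 0"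
    using \<nu> by (auto simp: sp_def G1_def G2_def GN_def Q1_def Q2_def P_def
                     intro!: Gamma_Re_pos_nonzero pochhammer_Re_pos_nonzero)
  have K: "2 * of_real 4 powr \<nu> / (of_real pi * Gamma (2 * \<nu> + 1)) = 2 / (sp * G1 * G2)"
    unfolding sp_def G1_def G2_def by (rule Legendre_duplication_constant[OF \<nu>])
  have B: "Beta (of_nat (p + q) + 1/2) (\<nu> - 1/2 + of_nat (2 * k) + 1) =
             fact (2 * (p + q)) * sp * 4 ^ k * Q1 * Q2 * G1 / (4 ^ (p + q) * fact (p + q) * GN)"
    using Beta_half_even_shift[OF \<nu>, of "p + q" k] by (simp add: sp_def Q1_def Q2_def G1_def GN_def add.assoc)
  have C: "of_nat ((p + q) choose p) = (fact (p + q) / (fact p * fact q) :: complex)"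
    using binomial_fact[of p "p + q"] by simp
  have "Gamma (of_nat k + \<nu> + 1) = P * G2"
    using Gamma_add_of_nat[of "\<nu> + 1" k] \<nu> by (simp add: P_def G2_def add_ac Re_pos_not_nonpos_Ints)
  moreover have "complex_of_real (u ^ (2 * (k + p)) * v ^ (2 * (k + q))) = 4 ^ k * (Y * Z)"
    unfolding Y_def Z_def by (simp add: power_divide power_mult_distrib power_add power_mult power2_eq_square mult_ac)
  ultimately have W: "bessel_product_term \<nu> u v (k, p, q) =
                        (-1) ^ (p + q) * (4 ^ k * (Y * Z)) / (GN * fact k * fact p * fact q * (P * G2))"
    by (simp add: bessel_product_term_def GN_def)
  show ?thesis
    unfolding K B C W Y_def[symmetric] Z_def[symmetric] P_def[symmetric] Q1_def[symmetric] Q2_def[symmetric]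
    using nz by (simp add: field_simps)
qed

lemma cos_coeff_binomial:
  "(-1) ^ j * complex_of_real ((2 * sqrt (u\<^sup>2 + v\<^sup>2)) ^ (2 * j)) / fact (2 * j) =
     (\<Sum>p\<le>j. (-1) ^ j * 4 ^ j * of_nat (j choose p) * of_real (u ^ (2 * p) * v ^ (2 * (j - p))) /
               fact (2 * j))"
proof -
  have "(2 * sqrt (u\<^sup>2 + v\<^sup>2))\<^sup>2 = 4 * (u\<^sup>2 + v\<^sup>2)"
    by (simp add: power_mult_distrib)
  then have "(2 * sqrt (u\<^sup>2 + v\<^sup>2)) ^ (2 * j) = 4 ^ j * (u\<^sup>2 + v\<^sup>2) ^ j"
    by (simp only: power_mult power_mult_distrib)
  also have "(u\<^sup>2 + v\<^sup>2) ^ j = (\<Sum>p\<le>j. real (j choose p) * (u ^ (2 * p) * v ^ (2 * (j - p))))"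
    by (simp add: binomial_ring mult_ac flip: power_mult)
  finally show ?thesis
    by (simp add: sum_distrib_left sum_divide_distrib mult_ac)
qed

lemma norm_Beta_half_le:
  assumes "-1 < r" "r \<le> Re w"
  shows "norm (Beta (of_nat j + 1/2) (w + 1) / 2) \<le> integral {0..1} (\<lambda>t. (1 - t\<^sup>2) powr r)"
proof -
  have "(beta_kernel j w has_integral Beta (of_nat j + 1/2) (w + 1) / 2) {0..1}"
    using assms by (intro has_integral_beta_kernel) simp
  then have "norm (Beta (of_nat j + 1/2) (w + 1) / 2) = norm (integral {0..1} (beta_kernel j w))"
    by (simp add: integral_unique)
  also have "\<dots> \<le> integral {0..1} (\<lambda>t. (1 - t\<^sup>2) powr r)"
    using assms integrable_one_minus_sq_powr[of r] beta_kernel_integrable[of w j]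
    by (intro integral_norm_bound_integral norm_beta_kernel_le) auto
  finally show ?thesis .
qed

lemma norm_cos_binomial_coeff_le:
  "norm ((-1) ^ (p + q) * 4 ^ (p + q) * of_nat ((p + q) choose p) * complex_of_real (u ^ (2 * p) * v ^ (2 * q)) /
           fact (2 * (p + q)))
     \<le> (4 * u\<^sup>2) ^ p / fact p * ((4 * v\<^sup>2) ^ q / fact q)"
proof -
  have "real ((p + q) choose p) = fact (p + q) / (fact p * fact q)"
    using binomial_fact[of p "p + q"] by simp
  then have "4 ^ (p + q) * real ((p + q) choose p) * (u ^ (2 * p) * v ^ (2 * q)) / fact (2 * (p + q)) =
               (4 * u\<^sup>2) ^ p / fact p * ((4 * v\<^sup>2) ^ q / fact q) * (fact (p + q) / fact (2 * (p + q)))"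
    by (simp add: power_mult_distrib power_add power_mult)
  also have "\<dots> \<le> (4 * u\<^sup>2) ^ p / fact p * ((4 * v\<^sup>2) ^ q / fact q) * 1"
    by (intro mult_left_mono) (simp_all add: fact_mono)
  finally show ?thesis
    by (simp add: norm_mult norm_divide norm_power power_mult power2_abs)
qed

lemma summable_on_product_nonneg:
  fixes f :: "'a \<Rightarrow> real" and g :: "'b \<Rightarrow> real"
  assumes "f summable_on UNIV" "g summable_on UNIV" "\<And>a. 0 \<le> f a" "\<And>b. 0 \<le> g b"
  shows "(\<lambda>(a, b). f a * g b) summable_on UNIV"
proof -
  obtain G where G: "(g has_sum G) UNIV" using assms(2) by (auto simp: summable_on_def)
  have "(\<lambda>(a, b). f a * g b) summable_on Sigma UNIV (\<lambda>_. UNIV)"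
  proof (rule summable_on_SigmaI[where g = "\<lambda>a. f a * G"])
    show "((\<lambda>b. (\<lambda>(a, b). f a * g b) (a, b)) has_sum f a * G) UNIV" for a
      using has_sum_cmult_right[OF G, of "f a"] by simp
    show "(\<lambda>a. f a * G) summable_on UNIV"
      using summable_on_cmult_left[OF assms(1)] by simp
  qed (use assms(3,4) in simp)
  then show ?thesis by simp
qed

lemma hyp0F3_series_term_eq_sum:
  assumes "-1/2 < Re \<nu>"
  shows "2 * of_real 4 powr \<nu> / (of_real pi * Gamma (2 * \<nu> + 1)) *
     ((-1) ^ j * of_real ((2 * sqrt (u\<^sup>2 + v\<^sup>2)) ^ (2 * j)) / fact (2 * j) *
      (of_real ((u\<^sup>2 * v\<^sup>2 / 4) ^ k) /
        (pochhammer (\<nu> + 1) k * pochhammer (\<nu>/2 + 1/4) k * pochhammer (\<nu>/2 + 3/4) k * fact k)) *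
      (Beta (of_nat j + 1/2) (\<nu> - 1/2 + of_nat (2 * k) + 1) / 2)) =
     (\<Sum>p\<le>j. bessel_product_term \<nu> u v (k, p, j - p))"
proof -
  have "bessel_product_term \<nu> u v (k, p, j - p) =
          2 * of_real 4 powr \<nu> / (of_real pi * Gamma (2 * \<nu> + 1)) *
          ((-1) ^ j * 4 ^ j * of_nat (j choose p) * of_real (u ^ (2 * p) * v ^ (2 * (j - p))) / fact (2 * j)) *
          (of_real ((u\<^sup>2 * v\<^sup>2 / 4) ^ k) /
            (pochhammer (\<nu> + 1) k * pochhammer (\<nu>/2 + 1/4) k * pochhammer (\<nu>/2 + 3/4) k * fact k)) *
          (Beta (of_nat j + 1/2) (\<nu> - 1/2 + of_nat (2 * k) + 1) / 2)" if "p \<le> j" for p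
    using bessel_product_term_factorization[OF assms, of p "j - p" u v k] that by simp
  then show ?thesis
    unfolding cos_coeff_binomial sum_distrib_right sum_distrib_left
    by (intro sum.cong) (simp_all add: mult.assoc)
qed

lemma summable_norm_bessel_product_term:
  assumes \<nu>: "-1/2 < Re \<nu>"
  shows "(\<lambda>i. norm (bessel_product_term \<nu> u v i)) summable_on UNIV"
proof -
  define K where "K = 2 * of_real 4 powr \<nu> / (of_real pi * Gamma (2 * \<nu> + 1))"
  define M where "M = integral {0..1} (\<lambda>t. (1 - t\<^sup>2) powr (Re \<nu> - 1/2))"
  define d where "d k = of_real ((u\<^sup>2 * v\<^sup>2 / 4) ^ k) /
    (pochhammer (\<nu> + 1) k * pochhammer (\<nu>/2 + 1/4) k * pochhammer (\<nu>/2 + 3/4) k * fact k)" for k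
  define e where "e = (\<lambda>(x::real) p. x ^ p / fact p)"
  define B where "B = (\<lambda>(k, p, q). norm K * M * (norm (d k) * (e (4 * u\<^sup>2) p * e (4 * v\<^sup>2) q)))"
  have e: "e x summable_on UNIV" "e x p \<ge> 0" if "0 \<le> x" for x p
    using that summable_exp[of x] by (auto simp: e_def divide_inverse mult.commute
        intro!: summable_nonneg_imp_summable_on_strong)
  have "(\<lambda>k. norm (d k)) summable_on UNIV"
    using summable_norm_hyp0F3_series[of "\<nu> + 1" "\<nu>/2 + 1/4" "\<nu>/2 + 3/4" "of_real ((u\<^sup>2 * v\<^sup>2 / 4))"] \<nu>
    by (intro summable_nonneg_imp_summable_on_strong) (auto simp: d_def)
  moreover have "(\<lambda>(p, q). e (4 * u\<^sup>2) p * e (4 * v\<^sup>2) q) summable_on UNIV"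
    using e by (intro summable_on_product_nonneg) auto
  ultimately have "(\<lambda>(k, pq). norm (d k) * (\<lambda>(p, q). e (4 * u\<^sup>2) p * e (4 * v\<^sup>2) q) pq) summable_on UNIV"
    using e by (intro summable_on_product_nonneg) (auto simp: case_prod_beta)
  moreover have "(\<lambda>(k, pq). norm (d k) * (\<lambda>(p, q). e (4 * u\<^sup>2) p * e (4 * v\<^sup>2) q) pq) =
                   (\<lambda>(k, p, q). norm (d k) * (e (4 * u\<^sup>2) p * e (4 * v\<^sup>2) q))"
    by (auto simp: fun_eq_iff)
  ultimately have "(\<lambda>(k, p, q). norm (d k) * (e (4 * u\<^sup>2) p * e (4 * v\<^sup>2) q)) summable_on UNIV"
    by simp
  then have "B summable_on UNIV"
    unfolding B_def using summable_on_cmult_right[of _ UNIV "norm K * M"] by (simp add: case_prod_unfold)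
  then show ?thesis
  proof (rule Infinite_Sum.abs_summable_on_comparison_test')
    fix i :: "nat \<times> nat \<times> nat"
    obtain k p q where i: "i = (k, p, q)" by (cases i) auto
    have "norm (bessel_product_term \<nu> u v (k, p, q)) =
            norm K * norm ((-1) ^ (p + q) * 4 ^ (p + q) * of_nat ((p + q) choose p) *
              complex_of_real (u ^ (2 * p) * v ^ (2 * q)) / fact (2 * (p + q))) * norm (d k) *
            norm (Beta (of_nat (p + q) + 1/2) (\<nu> - 1/2 + of_nat (2 * k) + 1) / 2)"
      unfolding bessel_product_term_factorization[OF \<nu>, symmetric] K_def d_def by (simp only: norm_mult)
    also have "\<dots> \<le> norm K * (e (4 * u\<^sup>2) p * e (4 * v\<^sup>2) q) * norm (d k) * M"
      unfolding M_def e_def using \<nu>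
      by (intro mult_mono norm_cos_binomial_coeff_le norm_Beta_half_le) auto
    finally show "norm (bessel_product_term \<nu> u v i) \<le> B i"
      by (simp add: i B_def mult_ac)
  qed
qed

lemma sums_suminf_if_has_sum_pairs:
  fixes f :: "nat \<Rightarrow> nat \<Rightarrow> 'a :: {banach, uniform_topological_group_add}"
  assumes "((\<lambda>(m, n). f m n) has_sum S) UNIV" and "\<And>m. summable (\<lambda>n. norm (f m n))"
  shows "(\<lambda>m. \<Sum>n. f m n) sums S"
proof -
  have "((\<lambda>m. \<Sum>n. f m n) has_sum S) UNIV"
  proof (rule has_sum_Sigma'[where f = "\<lambda>(m, n). f m n" and B = "\<lambda>_. UNIV"])
    show "((\<lambda>(m, n). f m n) has_sum S) (Sigma UNIV (\<lambda>_. UNIV))"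
      using assms(1) by simp
    show "((\<lambda>n. (\<lambda>(m, n). f m n) (m, n)) has_sum (\<Sum>n. f m n)) UNIV" for m
      using assms(2)[of m] by (simp add: norm_summable_imp_has_sum summable_norm_cancel summable_sums)
  qed
  then show ?thesis by (rule has_sum_imp_sums)
qed

lemma has_sum_regroup_min:
  fixes f :: "nat \<times> nat \<times> nat \<Rightarrow> 'a :: {banach, uniform_topological_group_add}"
  assumes "(f has_sum S) UNIV"
  shows "((\<lambda>(m, n). \<Sum>k\<le>min m n. f (k, m - k, n - k)) has_sum S) UNIV"
proof -
  have "(f has_sum S) UNIV \<longleftrightarrow>
          ((\<lambda>((m, n), k). f (k, m - k, n - k)) has_sum S) (Sigma UNIV (\<lambda>(m, n). {..min m n}))"
    by (rule has_sum_reindex_bij_witness[where i = "\<lambda>((m, n), k). (k, m - k, n - k)"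
          and j = "\<lambda>(k, p, q). ((k + p, k + q), k)"]) auto
  with assms have "((\<lambda>((m, n), k). f (k, m - k, n - k)) has_sum S) (Sigma UNIV (\<lambda>(m, n). {..min m n}))"
    by blast
  then show ?thesis
    by (rule has_sum_Sigma') (auto simp: has_sum_finite split: prod.splits)
qed

lemma has_sum_regroup_diagonal:
  fixes f :: "nat \<times> nat \<times> nat \<Rightarrow> 'a :: {banach, uniform_topological_group_add}"
  assumes "(f has_sum S) UNIV"
  shows "((\<lambda>(k, j). \<Sum>p\<le>j. f (k, p, j - p)) has_sum S) UNIV"
proof -
  have "(f has_sum S) UNIV \<longleftrightarrow> ((\<lambda>((k, j), p). f (k, p, j - p)) has_sum S) (Sigma UNIV (\<lambda>(k, j). {..j}))"
    by (rule has_sum_reindex_bij_witness[where i = "\<lambda>((k, j), p). (k, p, j - p)"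
          and j = "\<lambda>(k, p, q). ((k, p + q), p)"]) auto
  with assms have "((\<lambda>((k, j), p). f (k, p, j - p)) has_sum S) (Sigma UNIV (\<lambda>(k, j). {..j}))"
    by blast
  then show ?thesis
    by (rule has_sum_Sigma') (auto simp: has_sum_finite split: prod.splits)
qed

lemma has_sum_bessel_product_term:
  "-1/2 < Re \<nu> \<Longrightarrow> (bessel_product_term \<nu> u v has_sum (\<Sum>\<^sub>\<infinity>i. bessel_product_term \<nu> u v i)) UNIV"
  by (rule has_sum_infsum[OF abs_summable_summable[OF summable_norm_bessel_product_term]])

theorem besselJ_product_eq_infsum:
  assumes "0 < u" "0 < v" and \<nu>: "-1/2 < Re \<nu>"
  shows "besselJ \<nu> (of_real (2 * u)) * besselJ \<nu> (of_real (2 * v)) =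
           of_real u powr \<nu> * of_real v powr \<nu> * (\<Sum>\<^sub>\<infinity>i. bessel_product_term \<nu> u v i)"
proof -
  define T where "T = (\<Sum>\<^sub>\<infinity>i. bessel_product_term \<nu> u v i)"
  have \<nu>': "-1 < Re \<nu>" using \<nu> by simp
  have "((\<lambda>(m, n). bessel_coeff \<nu> u m * bessel_coeff \<nu> v n) has_sum T) UNIV"
    using has_sum_regroup_min[OF has_sum_bessel_product_term[OF \<nu>]]
    by (simp add: T_def bessel_coeff_mult[OF \<nu>'])
  then have "(\<lambda>m. \<Sum>n. bessel_coeff \<nu> u m * bessel_coeff \<nu> v n) sums T"
    by (rule sums_suminf_if_has_sum_pairs)
       (simp add: norm_mult summable_mult summable_norm_bessel_coeff[OF \<nu>'])
  moreover have "summable (bessel_coeff \<nu> w)" for w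
    by (rule summable_norm_cancel[OF summable_norm_bessel_coeff[OF \<nu>']])
  ultimately have "(\<lambda>m. bessel_coeff \<nu> u m * (\<Sum>n. bessel_coeff \<nu> v n)) sums T"
    and "(\<lambda>m. bessel_coeff \<nu> u m * (\<Sum>n. bessel_coeff \<nu> v n)) sums
           ((\<Sum>m. bessel_coeff \<nu> u m) * (\<Sum>n. bessel_coeff \<nu> v n))"
    by (simp_all add: suminf_mult summable_sums sums_mult2)
  then have "(\<Sum>m. bessel_coeff \<nu> u m) * (\<Sum>n. bessel_coeff \<nu> v n) = T"
    by (rule sums_unique2[symmetric])
  then show ?thesis
    unfolding besselJ_of_real_double[OF \<open>0 < u\<close> \<nu>'] besselJ_of_real_double[OF \<open>0 < v\<close> \<nu>']
    by (simp add: T_def mult_ac)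
qed

theorem integral_cos_hyp0F3_eq_infsum:
  assumes \<nu>: "-1/2 < Re \<nu>"
  shows "integral {0..1} (\<lambda>t. of_real (1 - t\<^sup>2) powr (\<nu> - 1/2) *
             of_real (cos (2 * sqrt (u\<^sup>2 + v\<^sup>2) * t)) *
             hyp0F3 (\<nu> + 1) (\<nu>/2 + 1/4) (\<nu>/2 + 3/4) (of_real (u\<^sup>2 * v\<^sup>2 / 4 * (1 - t\<^sup>2)\<^sup>2))) =
           of_real pi * Gamma (2 * \<nu> + 1) / (2 * of_real 4 powr \<nu>) * (\<Sum>\<^sub>\<infinity>i. bessel_product_term \<nu> u v i)"
proof -
  define K where "K = 2 * of_real 4 powr \<nu> / (of_real pi * Gamma (2 * \<nu> + 1))"
  define T where "T = (\<Sum>\<^sub>\<infinity>i. bessel_product_term \<nu> u v i)"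
  define d where "d k = of_real ((u\<^sup>2 * v\<^sup>2 / 4) ^ k) /
    (pochhammer (\<nu> + 1) k * pochhammer (\<nu>/2 + 1/4) k * pochhammer (\<nu>/2 + 3/4) k * fact k)" for k
  define c :: "nat \<Rightarrow> complex"
    where "c j = (-1) ^ j * of_real ((2 * sqrt (u\<^sup>2 + v\<^sup>2)) ^ (2 * j)) / fact (2 * j)" for j
  define a where "a k j = c j * (Beta (of_nat j + 1/2) (\<nu> - 1/2 + of_nat (2 * k) + 1) / 2)" for k j
  have K: "K \<noteq> 0"
    using \<nu> by (auto simp: K_def powr_def intro!: Gamma_Re_pos_nonzero)
  have summable_a: "summable (\<lambda>j. norm (a k j))" for k
  proof -
    define M where "M = integral {0..1} (\<lambda>t. (1 - t\<^sup>2) powr (Re \<nu> - 1/2))"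
    have bound: "norm (a k j) \<le> norm (c j) * M" for j
      unfolding a_def norm_mult M_def using \<nu> by (intro mult_left_mono norm_Beta_half_le) auto
    have "summable (\<lambda>j. norm (c j) * M)"
      unfolding c_def by (rule summable_mult2[OF summable_norm_cos_coeff])
    then show ?thesis
      by (rule summable_comparison_test') (use bound in simp)
  qed
  have "(\<Sum>p\<le>j. bessel_product_term \<nu> u v (k, p, j - p)) =
          K * (c j * d k * (Beta (of_nat j + 1/2) (\<nu> - 1/2 + of_nat (2 * k) + 1) / 2))" for k j
    unfolding K_def c_def d_def by (rule hyp0F3_series_term_eq_sum[OF \<nu>, symmetric])
  then have regroup: "(\<Sum>p\<le>j. bessel_product_term \<nu> u v (k, p, j - p)) = K * d k * a k j" for k j
    by (simp add: a_def mult_ac)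
  have "((\<lambda>(k, j). K * d k * a k j) has_sum T) UNIV"
    unfolding regroup[symmetric] T_def
    by (rule has_sum_regroup_diagonal[OF has_sum_bessel_product_term[OF \<nu>]])
  then have "(\<lambda>k. \<Sum>j. K * d k * a k j) sums T"
    by (rule sums_suminf_if_has_sum_pairs) (simp add: norm_mult summable_mult summable_a)
  then have "(\<lambda>k. K * (d k * (\<Sum>j. a k j))) sums T"
    using summable_a by (simp add: suminf_mult summable_norm_cancel mult.assoc)
  from sums_divide[OF this, of K] have "(\<lambda>k. d k * (\<Sum>j. a k j)) sums (T / K)"
    using K by simp
  moreover have "((\<lambda>t. of_real (1 - t\<^sup>2) powr (\<nu> - 1/2) * of_real (cos (2 * sqrt (u\<^sup>2 + v\<^sup>2) * t)) *
             hyp0F3 (\<nu> + 1) (\<nu>/2 + 1/4) (\<nu>/2 + 3/4) (of_real (u\<^sup>2 * v\<^sup>2 / 4 * (1 - t\<^sup>2)\<^sup>2)))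
           has_integral (\<Sum>k. d k * (\<Sum>j. a k j))) {0..1}"
    using has_integral_cos_hyp0F3[of "\<nu> - 1/2" "\<nu> + 1" "\<nu>/2 + 1/4" "\<nu>/2 + 3/4"
        "2 * sqrt (u\<^sup>2 + v\<^sup>2)" "u\<^sup>2 * v\<^sup>2 / 4"] \<nu>
    unfolding a_def c_def d_def by simp
  ultimately show ?thesis
    by (simp add: integral_unique sums_iff K_def T_def)
qed

theorem besselJ_product_integral:
  assumes "0 < u" "0 < v" and \<nu>: "-1/2 < Re \<nu>"
  shows "besselJ \<nu> (of_real (2 * u)) * besselJ \<nu> (of_real (2 * v)) =
           2 / (of_real pi * Gamma (2 * \<nu> + 1)) * of_real (4 * u * v) powr \<nu> *
           integral {0..1} (\<lambda>t. of_real (1 - t\<^sup>2) powr (\<nu> - 1/2) *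
             of_real (cos (2 * sqrt (u\<^sup>2 + v\<^sup>2) * t)) *
             hyp0F3 (\<nu> + 1) (\<nu>/2 + 1/4) (\<nu>/2 + 3/4) (of_real (u\<^sup>2 * v\<^sup>2 / 4 * (1 - t\<^sup>2)\<^sup>2)))"
proof -
  have "of_real (4 * u * v) powr \<nu> = of_real 4 powr \<nu> * (of_real u powr \<nu> * of_real v powr \<nu>)"
    using assms by (simp add: powr_times_real flip: mult.assoc)
  moreover have "Gamma (2 * \<nu> + 1) \<noteq> 0" "complex_of_real 4 powr \<nu> \<noteq> 0"
    using \<nu> by (auto simp: powr_def intro!: Gamma_Re_pos_nonzero)
  ultimately show ?thesis
    unfolding besselJ_product_eq_infsum[OF assms] integral_cos_hyp0F3_eq_infsum[OF \<nu>]
    by (simp add: field_simps)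
qed

theorem mainTheorem13:
  fixes \<nu> :: complex and a b x :: real
  assumes "Re \<nu> > -1/2" and "a > 0" and "b > 0" and "x > 0"
  shows "besselJ \<nu> (of_real (a * x)) * besselJ \<nu> (of_real (b * x)) =
    2 / (of_real pi * Gamma (2 * \<nu> + 1)) * (of_real (a * b * x^2)) powr \<nu> *
    integral {0..1} (\<lambda>t::real.
       (of_real (1 - t^2)) powr (\<nu> - 1/2) * of_real (cos (x * t * sqrt (a^2 + b^2))) *
       hyp0F3 (\<nu> + 1) (\<nu> / 2 + 1/4) (\<nu> / 2 + 3/4)
              (of_real (a^2 * b^2 * x^4 * (1 - t^2)^2 / 64)))"
proof -
  define u v where "u = a * x / 2" and "v = b * x / 2"
  have uv: "0 < u" "0 < v" using assms by (simp_all add: u_def v_def)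
  have "2 * sqrt (u\<^sup>2 + v\<^sup>2) * t = x * t * sqrt (a\<^sup>2 + b\<^sup>2)" for t
  proof -
    have "u\<^sup>2 + v\<^sup>2 = (x / 2)\<^sup>2 * (a\<^sup>2 + b\<^sup>2)"
      by (simp add: u_def v_def power_mult_distrib field_simps)
    then show ?thesis
      using assms by (simp add: real_sqrt_mult)
  qed
  moreover have "u\<^sup>2 * v\<^sup>2 / 4 = a\<^sup>2 * b\<^sup>2 * x ^ 4 / 64"
    by (simp add: u_def v_def power_mult_distrib power_divide)
  then have "u\<^sup>2 * v\<^sup>2 / 4 * (1 - t\<^sup>2)\<^sup>2 = a\<^sup>2 * b\<^sup>2 * x ^ 4 * (1 - t\<^sup>2)\<^sup>2 / 64" for t
    by simp
  ultimately have integrand: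
    "(\<lambda>t. of_real (1 - t\<^sup>2) powr (\<nu> - 1/2) * of_real (cos (2 * sqrt (u\<^sup>2 + v\<^sup>2) * t)) *
           hyp0F3 (\<nu> + 1) (\<nu>/2 + 1/4) (\<nu>/2 + 3/4) (of_real (u\<^sup>2 * v\<^sup>2 / 4 * (1 - t\<^sup>2)\<^sup>2))) =
     (\<lambda>t. of_real (1 - t\<^sup>2) powr (\<nu> - 1/2) * of_real (cos (x * t * sqrt (a\<^sup>2 + b\<^sup>2))) *
           hyp0F3 (\<nu> + 1) (\<nu> / 2 + 1/4) (\<nu> / 2 + 3/4) (of_real (a\<^sup>2 * b\<^sup>2 * x ^ 4 * (1 - t\<^sup>2)\<^sup>2 / 64)))"
    by (simp only:)
  have "a * x = 2 * u" "b * x = 2 * v" "4 * u * v = a * b * x\<^sup>2"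
    by (simp_all add: u_def v_def power2_eq_square)
  then show ?thesis
    using besselJ_product_integral[OF uv assms(1)] unfolding integrand by simp
qed

end
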